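(* Let $0\le q\le 1/2$ and consider the type II binary symmetric wiretap channel BSC-WT($q$), whose main channel is noiseless and whose eavesdropper channel is a binary symmetric channel with crossover probability $q$. Let $\{\mathcal{C}(n)\}$ be a good binary linear code sequence of rate $R_c$ with erasure rate threshold $\delta^{\star}$ for binary erasure channels. Let $\mathcal{C}_0(n)=\{0,1\}^n$ and $\mathcal{C}_1(n)=\mathcal{C}^{\perp}(n)$. Suppose the secure nested code sequence $\{\mathcal{C}_0(n),\mathcal{C}_1(n)\}$ is used over BSC-WT($q$). If $q\ge(1-\delta^{\star})/2$, then the rate-equivocation pair $(R,R_e)=(R_c,R_c)$ is achievable.
   Context: A binary linear code sequence $\{\mathcal{C}(n)\}$ consists of $(n,k_n)$ binary linear codes with common rate $R_c=k_n/n$; it is good if it achieves arbitrarily small word error probability over a noisy channel at nonzero rate. Its erasure rate threshold $\delta^\star$ is the worst-case (largest) erasure probability of a binary erasure channel at which the word error probability (under maximum-likelihood decoding) tends to zero as $n\to\infty$. Dual code: $\mathcal{C}^\perp(n)=\{\mathbf{x}\in\{0,1\}^n:\mathbf{x}\cdot\mathbf{y}=0\ \forall\mathbf{y}\in\mathcal{C}(n)\}$. Secure nested code sequence: $\mathcal{C}_1(n)\subseteq\mathcal{C}_0(n)$ linear codes of rates $R_1\le R_0$; cosets of $\mathcal{C}_1(n)$ in $\mathcal{C}_0(n)$ are indexed by messages $w\in\{1,\dots,M\}$, $M=2^{n(R_0-R_1)}$; a uniform message $W=w$ is encoded by choosing a codeword uniformly at random from coset $\mathcal{C}_w(n)$;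 the legitimate receiver recovers $w$ as the coset of the received word. Information rate is $R_0-R_1$. A pair $(R,R_e)$ is achievable if there is a rate-$R$ code sequence with average error probability at the legitimate receiver tending to $0$ and $R_e\le\lim_{n\to\infty}H(W|\mathbf{Z})/n$, where $\mathbf{Z}$ is the eavesdropper's output. *)

theory Defs
  imports "HOL-Analysis.Analysis"
begin

text \<open>Words of length n over {0,1} are boolean lists of length n (True = 1).\<close>

definition vecs :: "nat \<Rightarrow> bool list set" where
  "vecs n = {x. length x = n}"

definition vadd :: "bool list \<Rightarrow> bool list \<Rightarrow> bool list" where
  "vadd x y = map2 (\<noteq>) x y"

definition dotp :: "bool list \<Rightarrow> bool list \<Rightarrow> bool" where
  "dotp x y = odd (card {i. i < length x \<and> x ! i \<and> y ! i})"

definition hdist :: "bool list \<Rightarrow> bool list \<Rightarrow> nat" where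
  "hdist x y = card {i. i < length x \<and> x ! i \<noteq> y ! i}"

definition linear_code :: "nat \<Rightarrow> bool list set \<Rightarrow> bool" where
  "linear_code n C \<longleftrightarrow> C \<subseteq> vecs n \<and> replicate n False \<in> C \<and>
     (\<forall>x\<in>C. \<forall>y\<in>C. vadd x y \<in> C)"

definition dual_code :: "nat \<Rightarrow> bool list set \<Rightarrow> bool list set" where
  "dual_code n C = {x \<in> vecs n. \<forall>y\<in>C. \<not> dotp x y}"

text \<open>Average word error probability of ML decoding (ties broken uniformly at random)
  of the code C of length n over BEC(delta), codewords equiprobable.  For an erasure
  pattern S (set of erased positions) and transmitted word c, the ML decoder chooses
  uniformly among the codewords agreeing with c outside S.\<close>
definition bec_ml_error :: "nat \<Rightarrow> bool list set \<Rightarrow> real \<Rightarrow> real" where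
  "bec_ml_error n C \<delta> =
     (\<Sum>c\<in>C. \<Sum>S\<in>Pow {..<n}.
        (1 / real (card C)) * (\<delta> ^ card S * (1 - \<delta>) ^ (n - card S)) *
        (1 - 1 / real (card {c'\<in>C. \<forall>i<n. i \<notin> S \<longrightarrow> c' ! i = c ! i})))"

definition code_seq :: "(nat \<Rightarrow> nat) \<Rightarrow> (nat \<Rightarrow> bool list set) \<Rightarrow> real \<Rightarrow> bool" where
  "code_seq len C Rc \<longleftrightarrow> strict_mono len \<and> (\<forall>m. 0 < len m) \<and>
     (\<forall>m. linear_code (len m) (C m) \<and>
        (\<exists>k::nat. card (C m) = 2 ^ k \<and> real k = Rc * real (len m)))"

definition erasure_threshold :: "(nat \<Rightarrow> nat) \<Rightarrow> (nat \<Rightarrow> bool list set) \<Rightarrow> real" where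
  "erasure_threshold len C =
     Sup {\<delta> \<in> {0..1}. (\<lambda>m. bec_ml_error (len m) (C m) \<delta>) \<longlonglongrightarrow> 0}"

text \<open>Good: nonzero rate and vanishing word error probability over a noisy channel,
  here a binary erasure channel with erasure probability \<delta> > 0.\<close>
definition good_code_seq :: "(nat \<Rightarrow> nat) \<Rightarrow> (nat \<Rightarrow> bool list set) \<Rightarrow> real \<Rightarrow> bool" where
  "good_code_seq len C Rc \<longleftrightarrow> code_seq len C Rc \<and> 0 < Rc \<and>
     (\<exists>\<delta>. 0 < \<delta> \<and> \<delta> \<le> 1 \<and> (\<lambda>m. bec_ml_error (len m) (C m) \<delta>) \<longlonglongrightarrow> 0)"

text \<open>Messages = cosets of C1 in C0.\<close>
definition cosets :: "bool list set \<Rightarrow> bool list set \<Rightarrow> bool list set set" where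
  "cosets C0 C1 = (\<lambda>x. {vadd x y | y. y \<in> C1}) ` C0"

definition info_rate :: "nat \<Rightarrow> bool list set \<Rightarrow> bool list set \<Rightarrow> real" where
  "info_rate n C0 C1 = log 2 (real (card C0)) / real n - log 2 (real (card C1)) / real n"

definition bsc :: "real \<Rightarrow> nat \<Rightarrow> bool list \<Rightarrow> bool list \<Rightarrow> real" where
  "bsc q n x z = q ^ hdist x z * (1 - q) ^ (n - hdist x z)"

text \<open>Joint probability P(W = w, Z = z): W uniform over the cosets, X uniform in the
  coset w, Z the output of BSC(q) with input X.\<close>
definition p_WZ :: "real \<Rightarrow> nat \<Rightarrow> bool list set \<Rightarrow> bool list set \<Rightarrow>
                     bool list set \<Rightarrow> bool list \<Rightarrow> real" where
  "p_WZ q n C0 C1 w z =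
     (\<Sum>x\<in>w. (1 / real (card (cosets C0 C1))) * (1 / real (card w)) * bsc q n x z)"

definition p_Z :: "real \<Rightarrow> nat \<Rightarrow> bool list set \<Rightarrow> bool list set \<Rightarrow> bool list \<Rightarrow> real" where
  "p_Z q n C0 C1 z = (\<Sum>w\<in>cosets C0 C1. p_WZ q n C0 C1 w z)"

text \<open>Equivocation H(W|Z) in bits (note log 2 0 = 0 in Isabelle, giving 0 log 0 = 0).\<close>
definition equivocation :: "real \<Rightarrow> nat \<Rightarrow> bool list set \<Rightarrow> bool list set \<Rightarrow> real" where
  "equivocation q n C0 C1 =
     - (\<Sum>w\<in>cosets C0 C1. \<Sum>z\<in>vecs n.
          p_WZ q n C0 C1 w z * log 2 (p_WZ q n C0 C1 w z / p_Z q n C0 C1 z))"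

text \<open>Average error probability at the legitimate receiver: the main channel is
  noiseless, so it receives X and decodes the coset of the received word.\<close>
definition legit_error :: "nat \<Rightarrow> bool list set \<Rightarrow> bool list set \<Rightarrow> real" where
  "legit_error n C0 C1 =
     (\<Sum>w\<in>cosets C0 C1. \<Sum>x\<in>w.
        (1 / real (card (cosets C0 C1))) * (1 / real (card w)) *
        (if {vadd x y | y. y \<in> C1} \<noteq> w then 1 else 0))"

definition nested_achieves ::
  "real \<Rightarrow> (nat \<Rightarrow> nat) \<Rightarrow> (nat \<Rightarrow> bool list set) \<Rightarrow> (nat \<Rightarrow> bool list set) \<Rightarrow>
   real \<Rightarrow> real \<Rightarrow> bool" where
  "nested_achieves q len C0 C1 R R\<^sub>e \<longleftrightarrow>
     (\<forall>m. info_rate (len m) (C0 m) (C1 m) = R) \<and>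
     (\<lambda>m. legit_error (len m) (C0 m) (C1 m)) \<longlonglongrightarrow> 0 \<and>
     ereal R\<^sub>e \<le> liminf (\<lambda>m. ereal (equivocation q (len m) (C0 m) (C1 m) / real (len m)))"

end

(*
  Independently with probability 2q, BSC(q) replaces each bit by a uniform random bit.  Given the
  set S of randomized positions, the eavesdropper's posterior over the messages (the cosets of
  the dual code) is uniform on its support, which by the duality count
  |vecs_on S \<inter> C\<^sup>\<perp>| |C| = 2^|S| |C \<inter> vecs_on (-S)| has 2^k / |C \<inter> vecs_on (-S)| elements.
  Hence H(W|Z) \<ge> k - E log |C \<inter> vecs_on T| for a random erasure pattern T = -S of erasure
  probability 1 - 2q, i.e. k minus the equivocation of C over BEC(1 - 2q).  That equivocation
  changes by at most one bit per erased position, so moving to an erasure probability d below the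
  threshold costs at most n max(0, 1 - 2q - d); at d it is at most 2k times the ML word error
  probability, which vanishes.  As 1 - 2q \<le> \<delta>*, the equivocation rate is asymptotically at
  least k/n = Rc.
  The legitimate receiver sees the codeword itself, so it never errs.
*)

theory Submission
  imports Defs
begin

definition supp :: "bool list \<Rightarrow> nat set" where
  "supp x = {i. i < length x \<and> x ! i}"

definition vecs_on :: "nat \<Rightarrow> nat set \<Rightarrow> bool list set" where
  "vecs_on n S = {x \<in> vecs n. supp x \<subseteq> S}"

definition bool_sign :: "bool \<Rightarrow> real" where
  "bool_sign b = (if b then -1 else 1)"

definition coset :: "bool list set \<Rightarrow> bool list \<Rightarrow> bool list set" where
  "coset D x = {vadd x y | y. y \<in> D}"

lemma length_vadd [simp]: "length (vadd x y) = min (length x) (length y)"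
  by (simp add: vadd_def)

lemma nth_vadd [simp]: "i < length x \<Longrightarrow> i < length y \<Longrightarrow> vadd x y ! i = (x ! i \<noteq> y ! i)"
  by (simp add: vadd_def)

lemma vadd_vadd_cancel_right: "length x = length y \<Longrightarrow> vadd (vadd x y) y = x"
  by (rule nth_equalityI) auto

lemma vadd_vadd_cancel_left: "length x = length y \<Longrightarrow> vadd y (vadd y x) = x"
  by (rule nth_equalityI) auto

lemma vadd_self: "vadd x x = replicate (length x) False"
  by (rule nth_equalityI) auto

lemma vadd_comm: "vadd x y = vadd y x"
  by (rule nth_equalityI) auto

lemma inj_on_vadd: "inj_on (vadd x) {y. length y = length x}"
  by (rule inj_onI) (simp, metis vadd_vadd_cancel_left)

lemma vecs_eq_lists: "vecs n = {xs. set xs \<subseteq> UNIV \<and> length xs = n}"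
  by (auto simp: vecs_def)

lemma finite_vecs [simp]: "finite (vecs n)"
  using finite_lists_length_eq[of "UNIV :: bool set" n] by (simp add: vecs_eq_lists)

lemma card_vecs: "card (vecs n) = 2 ^ n"
  using card_lists_length_eq[of "UNIV :: bool set" n] by (simp add: vecs_eq_lists)

lemma supp_subset_lessThan: "supp x \<subseteq> {..<length x}"
  by (auto simp: supp_def)

lemma supp_vadd_subset: "length x = length y \<Longrightarrow> supp (vadd x y) \<subseteq> supp x \<union> supp y"
  by (auto simp: supp_def)

lemma hdist_eq_card_supp: "length x = length z \<Longrightarrow> hdist x z = card (supp (vadd x z))"
  unfolding hdist_def supp_def by (rule arg_cong[where f = card]) auto

lemma vecs_on_subset_vecs: "vecs_on n S \<subseteq> vecs n"
  by (auto simp: vecs_on_def)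

lemma finite_vecs_on [simp]: "finite (vecs_on n S)"
  by (rule finite_subset[OF vecs_on_subset_vecs finite_vecs])

lemma replicate_False_in_vecs_on: "replicate n False \<in> vecs_on n S"
  by (auto simp: vecs_on_def vecs_def supp_def)

lemma vecs_on_lessThan: "vecs_on n {..<n} = vecs n"
  using supp_subset_lessThan by (fastforce simp: vecs_on_def vecs_def)

lemma vecs_on_empty: "vecs_on n {} = {replicate n False}"
proof -
  have "x = replicate n False" if "length x = n" "supp x = {}" for x
    using that by (intro nth_equalityI) (auto simp: supp_def)
  then show ?thesis using replicate_False_in_vecs_on by (auto simp: vecs_on_def vecs_def)
qed

lemma card_vecs_on:
  assumes "S \<subseteq> {..<n}"
  shows "card (vecs_on n S) = 2 ^ card S"
proof -
  have "bij_betw supp (vecs_on n S) (Pow S)"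
  proof (rule bij_betw_byWitness[where f' = "\<lambda>T. map (\<lambda>i. i \<in> T) [0..<n]"])
    show "\<forall>x\<in>vecs_on n S. map (\<lambda>i. i \<in> supp x) [0..<n] = x"
      by (auto simp: vecs_on_def vecs_def supp_def intro: nth_equalityI)
    show "\<forall>T\<in>Pow S. supp (map (\<lambda>i. i \<in> T) [0..<n]) = T"
      using assms by (auto simp: supp_def)
    show "supp ` vecs_on n S \<subseteq> Pow S"
      by (auto simp: vecs_on_def)
    show "(\<lambda>T. map (\<lambda>i. i \<in> T) [0..<n]) ` Pow S \<subseteq> vecs_on n S"
      by (auto simp: vecs_on_def vecs_def supp_def)
  qed
  then have "card (vecs_on n S) = card (Pow S)"
    by (rule bij_betw_same_card)
  then show ?thesis
    using assms by (simp add: card_Pow finite_subset)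
qed

lemma odd_card_sym_diff:
  assumes "finite A" "finite B"
  shows "odd (card ((A - B) \<union> (B - A))) \<longleftrightarrow> odd (card A) \<noteq> odd (card B)"
proof -
  have "card ((A - B) \<union> (B - A)) = card (A - B) + card (B - A)"
    by (rule card_Un_disjoint) (use assms in auto)
  moreover have "card A = card (A \<inter> B) + card (A - B)" "card B = card (A \<inter> B) + card (B - A)"
    using assms card_Int_Diff[of A B] card_Int_Diff[of B A] by (simp_all add: Int_commute)
  ultimately show ?thesis by auto
qed

lemma dotp_vadd_left:
  assumes "length y = length x" "length z = length x"
  shows "dotp (vadd x y) z \<longleftrightarrow> dotp x z \<noteq> dotp y z"
proof -
  let ?A = "{i. i < length x \<and> x ! i \<and> z ! i}" and ?B = "{i. i < length y \<and> y ! i \<and> z ! i}"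
  have "{i. i < length (vadd x y) \<and> vadd x y ! i \<and> z ! i} = (?A - ?B) \<union> (?B - ?A)"
    using assms by auto
  then show ?thesis unfolding dotp_def using odd_card_sym_diff[of ?A ?B] by simp
qed

lemma dotp_comm:
  assumes "length x = length y"
  shows "dotp x y = dotp y x"
proof -
  have "{i. i < length x \<and> x ! i \<and> y ! i} = {i. i < length y \<and> y ! i \<and> x ! i}"
    using assms by auto
  then show ?thesis by (simp add: dotp_def)
qed

lemma dotp_replicate_False: "\<not> dotp (replicate n False) y"
proof -
  have "{i. i < length (replicate n False) \<and> replicate n False ! i \<and> y ! i} = {}" by auto
  then show ?thesis unfolding dotp_def by (simp only: card.empty) simp
qed

section \<open>Character sums and the duality count\<close>

lemma sum_bool_sign_eq_0_if_flip:
  assumes "finite X" "\<And>x. x \<in> X \<Longrightarrow> g x \<in> X" "\<And>x. x \<in> X \<Longrightarrow> g (g x) = x"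
    and "\<And>x. x \<in> X \<Longrightarrow> f (g x) = (\<not> f x)"
  shows "(\<Sum>x\<in>X. bool_sign (f x)) = 0"
proof -
  have "(\<Sum>x\<in>X. bool_sign (f x)) = (\<Sum>x\<in>X. bool_sign (f (g x)))"
    by (rule sum.reindex_bij_witness[of _ g g]) (use assms in auto)
  also have "\<dots> = (\<Sum>x\<in>X. - bool_sign (f x))"
    using assms(4) by (intro sum.cong) (auto simp: bool_sign_def)
  also have "\<dots> = - (\<Sum>x\<in>X. bool_sign (f x))"
    by (rule sum_negf)
  finally show ?thesis by simp
qed

lemma sum_bool_sign_dotp_vecs_on:
  assumes "c \<in> vecs n"
  shows "(\<Sum>x\<in>vecs_on n S. bool_sign (dotp x c)) =
    (if supp c \<inter> S = {} then real (card (vecs_on n S)) else 0)"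
proof (cases "supp c \<inter> S = {}")
  case True
  have "\<not> dotp x c" if "x \<in> vecs_on n S" for x
  proof -
    have "{i. i < length x \<and> x ! i \<and> c ! i} = {}"
      using that assms True by (auto simp: vecs_on_def vecs_def supp_def)
    then show ?thesis unfolding dotp_def by (simp only: card.empty) simp
  qed
  then show ?thesis using True by (simp add: bool_sign_def)
next
  case False
  then obtain i where i: "i \<in> S" "i < n" "c ! i"
    using assms by (auto simp: supp_def vecs_def)
  \<comment> \<open>adding the unit vector at i flips the inner product with c\<close>
  define e where "e = map (\<lambda>j. j = i) [0..<n]"
  have e: "e \<in> vecs_on n S" "supp e = {i}" "length e = n"
    using i by (auto simp: e_def vecs_on_def vecs_def supp_def)
  have "dotp e c"
  proof -
    have "{j. j < length e \<and> e ! j \<and> c ! j} = {i}" using i by (auto simp: e_def)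
    then show ?thesis by (simp add: dotp_def)
  qed
  then have "(\<Sum>x\<in>vecs_on n S. bool_sign (dotp x c)) = 0"
    using e assms supp_vadd_subset[of _ e]
    by (intro sum_bool_sign_eq_0_if_flip[OF finite_vecs_on, where g = "\<lambda>x. vadd x e"])
      (auto simp: vecs_on_def vecs_def vadd_vadd_cancel_right dotp_vadd_left)
  then show ?thesis using False by simp
qed

lemma dual_code_linear:
  assumes "C \<subseteq> vecs n"
  shows "linear_code n (dual_code n C)"
  using assms dotp_replicate_False dotp_vadd_left
  unfolding linear_code_def dual_code_def by (auto simp: vecs_def)

locale binary_linear_code =
  fixes n :: nat and C :: "bool list set"
  assumes linear: "linear_code n C"
begin

lemma code_subset_vecs: "C \<subseteq> vecs n"
  and zero_in_code: "replicate n False \<in> C"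
  and vadd_in_code: "x \<in> C \<Longrightarrow> y \<in> C \<Longrightarrow> vadd x y \<in> C"
  using linear by (auto simp: linear_code_def)

lemma length_code: "x \<in> C \<Longrightarrow> length x = n"
  using code_subset_vecs by (auto simp: vecs_def)

lemma finite_code [simp]: "finite C"
  by (rule finite_subset[OF code_subset_vecs finite_vecs])

lemma sum_bool_sign_dotp_code:
  assumes "x \<in> vecs n"
  shows "(\<Sum>c\<in>C. bool_sign (dotp x c)) = (if x \<in> dual_code n C then real (card C) else 0)"
proof (cases "x \<in> dual_code n C")
  case True
  then show ?thesis by (simp add: dual_code_def bool_sign_def)
next
  case False
  then obtain c0 where c0: "c0 \<in> C" "dotp x c0"
    using assms by (auto simp: dual_code_def)
  have "dotp x (vadd c x') \<longleftrightarrow> dotp x c \<noteq> dotp x x'" if "c \<in> C" "x' \<in> C" for c x'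
  proof -
    have len: "length c = length x" "length x' = length x"
      using that assms length_code by (auto simp: vecs_def)
    then have "dotp x (vadd c x') = dotp (vadd c x') x"
      by (intro dotp_comm) simp
    also have "\<dots> \<longleftrightarrow> dotp c x \<noteq> dotp x' x"
      using len by (intro dotp_vadd_left) simp_all
    also have "\<dots> \<longleftrightarrow> dotp x c \<noteq> dotp x x'"
      using len dotp_comm[of c x] dotp_comm[of x' x] by simp
    finally show ?thesis .
  qed
  then have "(\<Sum>c\<in>C. bool_sign (dotp x c)) = 0"
    using c0 length_code vadd_in_code
    by (intro sum_bool_sign_eq_0_if_flip[where g = "\<lambda>c. vadd c c0"]) (auto simp: vadd_vadd_cancel_right)
  then show ?thesis using False by simp
qed

lemma code_vecs_on_eq: "{c \<in> C. supp c \<inter> S = {}} = C \<inter> vecs_on n ({..<n} - S)"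
  using code_subset_vecs supp_subset_lessThan length_code by (fastforce simp: vecs_on_def)

text \<open>Counting the pairs (x, c) with x in vecs_on n S and c in C weighted by (-1)^{x\<cdot>c} in
  both orders.\<close>
lemma card_dual_vecs_on:
  assumes "S \<subseteq> {..<n}"
  shows "real (card (vecs_on n S \<inter> dual_code n C)) * real (card C) =
    2 ^ card S * real (card (C \<inter> vecs_on n ({..<n} - S)))"
proof -
  have "(\<Sum>x\<in>vecs_on n S. \<Sum>c\<in>C. bool_sign (dotp x c)) =
      (\<Sum>x\<in>vecs_on n S. if x \<in> dual_code n C then real (card C) else 0)"
    by (rule sum.cong[OF refl]) (simp add: sum_bool_sign_dotp_code subsetD[OF vecs_on_subset_vecs])
  also have "\<dots> = real (card C) * real (card (vecs_on n S \<inter> dual_code n C))"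
    by (simp add: sum.If_cases Int_def)
  finally have by_vecs: "(\<Sum>x\<in>vecs_on n S. \<Sum>c\<in>C. bool_sign (dotp x c)) =
      real (card C) * real (card (vecs_on n S \<inter> dual_code n C))" .
  have "(\<Sum>x\<in>vecs_on n S. \<Sum>c\<in>C. bool_sign (dotp x c)) =
      (\<Sum>c\<in>C. \<Sum>x\<in>vecs_on n S. bool_sign (dotp x c))"
    by (rule sum.swap)
  also have "\<dots> = (\<Sum>c\<in>C. if supp c \<inter> S = {} then real (card (vecs_on n S)) else 0)"
    by (rule sum.cong[OF refl]) (simp add: sum_bool_sign_dotp_vecs_on subsetD[OF code_subset_vecs])
  also have "\<dots> = real (card (vecs_on n S)) * real (card {c \<in> C. supp c \<inter> S = {}})"
    by (simp add: sum.If_cases Int_def)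
  finally show ?thesis
    using by_vecs card_vecs_on[OF assms] code_vecs_on_eq by (simp add: mult.commute)
qed

lemma card_dual_code: "real (card (dual_code n C)) * real (card C) = 2 ^ n"
proof -
  have "vecs_on n {..<n} \<inter> dual_code n C = dual_code n C"
    unfolding vecs_on_lessThan dual_code_def by blast
  moreover have "C \<inter> vecs_on n ({..<n} - {..<n}) = {replicate n False}"
    using zero_in_code vecs_on_empty by simp
  ultimately show ?thesis
    using card_dual_vecs_on[of "{..<n}"] by (simp only: card_lessThan card.empty card_insert_disjoint) simp
qed

lemma binary_linear_code_dual: "binary_linear_code n (dual_code n C)"
  using dual_code_linear[OF code_subset_vecs] by unfold_locales

end

lemma cosets_eq_image: "cosets A D = coset D ` A"
  by (simp add: cosets_def coset_def)

lemma finite_cosets: "finite A \<Longrightarrow> finite (cosets A D)"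
  by (simp add: cosets_eq_image)

context binary_linear_code
begin

lemma mem_coset_iff:
  assumes "x \<in> vecs n"
  shows "y \<in> coset C x \<longleftrightarrow> y \<in> vecs n \<and> vadd x y \<in> C"
proof
  assume "y \<in> coset C x"
  then obtain c where "c \<in> C" "y = vadd x c"
    by (auto simp: coset_def)
  then show "y \<in> vecs n \<and> vadd x y \<in> C"
    using assms length_code by (auto simp: vecs_def vadd_vadd_cancel_left)
next
  assume y: "y \<in> vecs n \<and> vadd x y \<in> C"
  then have "y = vadd x (vadd x y)"
    using assms by (simp add: vecs_def vadd_vadd_cancel_left)
  then show "y \<in> coset C x"
    using y unfolding coset_def by blast
qed

lemma coset_subset_vecs: "x \<in> vecs n \<Longrightarrow> coset C x \<subseteq> vecs n"
  using mem_coset_iff by blast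

lemma self_in_coset: "x \<in> vecs n \<Longrightarrow> x \<in> coset C x"
  using zero_in_code mem_coset_iff[of x x] by (simp add: vadd_self vecs_def)

lemma coset_eq:
  assumes x: "x \<in> vecs n" and y: "y \<in> coset C x"
  shows "coset C y = coset C x"
proof -
  have yx: "y \<in> vecs n" "vadd x y \<in> C"
    using x y mem_coset_iff by auto
  have "vadd y u \<in> C \<longleftrightarrow> vadd x u \<in> C" if "u \<in> vecs n" for u
  proof -
    have "vadd x u = vadd (vadd x y) (vadd y u)" "vadd y u = vadd (vadd x y) (vadd x u)"
      using x yx that by (auto simp: vecs_def intro: nth_equalityI)
    then show ?thesis using yx(2) vadd_in_code by metis
  qed
  then show ?thesis
    using mem_coset_iff[OF x] mem_coset_iff[OF yx(1)] by blast
qed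

lemma card_coset:
  assumes "x \<in> vecs n"
  shows "card (coset C x) = card C"
proof -
  have "coset C x = vadd x ` C"
    by (auto simp: coset_def)
  moreover have "inj_on (vadd x) C"
    using inj_on_vadd[of x] length_code assms by (auto simp: vecs_def intro: inj_on_subset)
  ultimately show ?thesis
    by (simp add: card_image)
qed

lemma mem_cosetsE:
  assumes "w \<in> cosets (vecs n) C"
  obtains "w \<subseteq> vecs n" "finite w" "card w = card C" "\<And>x. x \<in> w \<Longrightarrow> coset C x = w"
proof -
  obtain x0 where x0: "x0 \<in> vecs n" "w = coset C x0"
    using assms by (auto simp: cosets_eq_image)
  then have "w \<subseteq> vecs n"
    using coset_subset_vecs by blast
  moreover have "finite w"
    using finite_subset[OF \<open>w \<subseteq> vecs n\<close> finite_vecs] .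
  ultimately show thesis
    using that x0 card_coset coset_eq by blast
qed

lemma sum_cosets: "(\<Sum>w\<in>cosets (vecs n) C. \<Sum>x\<in>w. f x) = (\<Sum>x\<in>vecs n. f x)"
proof -
  have "\<Union>(cosets (vecs n) C) = vecs n"
    using self_in_coset coset_subset_vecs by (auto simp: cosets_eq_image)
  moreover have "(\<Sum>x\<in>\<Union>(cosets (vecs n) C). f x) = (\<Sum>w\<in>cosets (vecs n) C. \<Sum>x\<in>w. f x)"
    using sum.Union_disjoint[of "cosets (vecs n) C" f]
    by (simp add: comp_def) (metis disjoint_iff mem_cosetsE)
  ultimately show ?thesis by simp
qed

lemma card_cosets: "real (card (cosets (vecs n) C)) * real (card C) = 2 ^ n"
proof -
  have "(\<Sum>w\<in>cosets (vecs n) C. \<Sum>x\<in>w. 1) = (\<Sum>w\<in>cosets (vecs n) C. real (card C))"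
    by (rule sum.cong[OF refl]) (auto elim: mem_cosetsE)
  then have "real (card (cosets (vecs n) C)) * real (card C) = (\<Sum>w\<in>cosets (vecs n) C. \<Sum>x\<in>w. 1)"
    by simp
  also have "\<dots> = 2 ^ n"
    using sum_cosets[of "\<lambda>_. 1 :: real"] card_vecs by simp
  finally show ?thesis .
qed

lemma legit_error_eq_0: "legit_error n (vecs n) C = 0"
proof -
  have "{vadd x y | y. y \<in> C} = w" if "w \<in> cosets (vecs n) C" "x \<in> w" for w x
    using that by (metis coset_def mem_cosetsE)
  then show ?thesis
    by (simp add: legit_error_def)
qed

lemma card_coset_vadd_supp_subset:
  assumes "x0 \<in> vecs n"
  shows "card {x \<in> coset C x0. supp (vadd x x0) \<subseteq> S} = card (C \<inter> vecs_on n S)"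
proof -
  have cancel: "vadd (vadd x0 c) x0 = c" if "c \<in> C" for c
  proof -
    have "length c = length x0"
      using that assms length_code by (simp add: vecs_def)
    then show ?thesis
      using vadd_comm[of x0 c] vadd_vadd_cancel_right[of c x0] by simp
  qed
  have "{x \<in> coset C x0. supp (vadd x x0) \<subseteq> S} = vadd x0 ` (C \<inter> vecs_on n S)"
    using cancel code_subset_vecs unfolding coset_def vecs_on_def by auto
  moreover have "inj_on (vadd x0) (C \<inter> vecs_on n S)"
    using inj_on_vadd[of x0] length_code assms by (auto simp: vecs_def intro: inj_on_subset)
  ultimately show ?thesis
    by (simp add: card_image)
qed

lemma code_vecs_on_ne_empty [simp]: "C \<inter> vecs_on n T \<noteq> {}"
  using zero_in_code replicate_False_in_vecs_on by blast

lemma card_code_vecs_on_pos: "0 < card (C \<inter> vecs_on n T)"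
  by (simp add: card_gt_0_iff)

text \<open>Once one codeword c0 supported in insert a T has a in its support, c \<mapsto> c0 + c maps every
  other such codeword into C \<inter> vecs_on n T.\<close>
lemma card_code_vecs_on_insert_le:
  "card (C \<inter> vecs_on n (insert a T)) \<le> 2 * card (C \<inter> vecs_on n T)"
proof (cases "C \<inter> vecs_on n (insert a T) \<subseteq> vecs_on n T")
  case True
  then have "card (C \<inter> vecs_on n (insert a T)) \<le> card (C \<inter> vecs_on n T)"
    by (intro card_mono) auto
  then show ?thesis
    by simp
next
  case False
  let ?K = "C \<inter> vecs_on n T"
  obtain c0 where c0: "c0 \<in> C \<inter> vecs_on n (insert a T)" "a \<in> supp c0"
    using False by (auto simp: vecs_on_def)
  have "c \<in> ?K \<union> vadd c0 ` ?K" if c: "c \<in> C \<inter> vecs_on n (insert a T)" for c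
  proof (cases "a \<in> supp c")
    case True
    have "vadd c0 c \<in> C" "c = vadd c0 (vadd c0 c)"
      using c c0 vadd_in_code length_code by (auto simp: vadd_vadd_cancel_left)
    moreover have "supp (vadd c0 c) \<subseteq> T"
      using c c0 True length_code by (auto simp: vecs_on_def supp_def)
    ultimately show ?thesis
      using c c0 by (auto simp: vecs_on_def vecs_def)
  qed (use c in \<open>auto simp: vecs_on_def\<close>)
  then have "card (C \<inter> vecs_on n (insert a T)) \<le> card (?K \<union> vadd c0 ` ?K)"
    by (intro card_mono) auto
  also have "\<dots> \<le> card ?K + card (vadd c0 ` ?K)"
    by (rule card_Un_le)
  also have "\<dots> \<le> 2 * card ?K"
    using card_image_le[of ?K "vadd c0"] by simp
  finally show ?thesis .
qed

end

section \<open>Random subsets\<close>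

lemma sum_Pow_binomial:
  fixes a b :: real
  assumes "finite A"
  shows "(\<Sum>T\<in>Pow A. a ^ card T * b ^ card (A - T)) = (a + b) ^ card A"
  using prod_add[OF assms, of "\<lambda>_. a" "\<lambda>_. b"] by simp

lemma sum_Pow_supersets_binomial:
  fixes a b :: real
  assumes "finite A" "X \<subseteq> A"
  shows "(\<Sum>T\<in>{T\<in>Pow A. X \<subseteq> T}. a ^ card T * b ^ card (A - T)) = a ^ card X * (a + b) ^ card (A - X)"
proof -
  have "finite X"
    using assms finite_subset by blast
  have "bij_betw (\<lambda>T. X \<union> T) (Pow (A - X)) {T\<in>Pow A. X \<subseteq> T}"
    using assms by (intro bij_betw_byWitness[where f' = "\<lambda>T. T - X"]) auto
  then have "(\<Sum>T\<in>{T\<in>Pow A. X \<subseteq> T}. a ^ card T * b ^ card (A - T)) =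
      (\<Sum>T\<in>Pow (A - X). a ^ card (X \<union> T) * b ^ card (A - (X \<union> T)))"
    by (rule sum.reindex_bij_betw[symmetric])
  also have "\<dots> = (\<Sum>T\<in>Pow (A - X). a ^ card X * (a ^ card T * b ^ card ((A - X) - T)))"
  proof (rule sum.cong[OF refl])
    fix T assume "T \<in> Pow (A - X)"
    then have "finite T" "X \<inter> T = {}"
      using assms(1) finite_subset by auto
    then have "card (X \<union> T) = card X + card T" "A - (X \<union> T) = (A - X) - T"
      using \<open>finite X\<close> by (auto intro: card_Un_disjoint)
    then show "a ^ card (X \<union> T) * b ^ card (A - (X \<union> T)) =
        a ^ card X * (a ^ card T * b ^ card ((A - X) - T))"
      by (simp add: power_add)
  qed
  also have "\<dots> = a ^ card X * (a + b) ^ card (A - X)"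
    using sum_Pow_binomial[of "A - X" a b] assms by (simp flip: sum_distrib_left)
  finally show ?thesis .
qed

text \<open>subset_mean t A f is the mean of f T for a random subset T of A containing each element
  independently with probability t.\<close>
definition subset_weight :: "real \<Rightarrow> nat set \<Rightarrow> nat set \<Rightarrow> real" where
  "subset_weight t A T = t ^ card T * (1 - t) ^ card (A - T)"

definition subset_mean :: "real \<Rightarrow> nat set \<Rightarrow> (nat set \<Rightarrow> real) \<Rightarrow> real" where
  "subset_mean t A f = (\<Sum>T\<in>Pow A. subset_weight t A T * f T)"

lemma subset_weight_nonneg: "0 \<le> t \<Longrightarrow> t \<le> 1 \<Longrightarrow> 0 \<le> subset_weight t A T"
  by (simp add: subset_weight_def)

lemma subset_mean_const: "finite A \<Longrightarrow> subset_mean t A (\<lambda>_. c) = c"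
  using sum_Pow_binomial[of A t "1 - t"]
  by (simp add: subset_mean_def subset_weight_def flip: sum_distrib_right)

lemma subset_mean_cong: "(\<And>T. T \<subseteq> A \<Longrightarrow> f T = g T) \<Longrightarrow> subset_mean t A f = subset_mean t A g"
  unfolding subset_mean_def by (intro sum.cong) auto

lemma subset_mean_mono:
  assumes "0 \<le> t" "t \<le> 1" "\<And>T. T \<subseteq> A \<Longrightarrow> 0 < subset_weight t A T \<Longrightarrow> f T \<le> g T"
  shows "subset_mean t A f \<le> subset_mean t A g"
  unfolding subset_mean_def
proof (rule sum_mono)
  fix T assume "T \<in> Pow A"
  then show "subset_weight t A T * f T \<le> subset_weight t A T * g T"
    using assms subset_weight_nonneg[of t A T] by (cases "subset_weight t A T = 0") auto
qed

lemma subset_mean_add_const: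
  "finite A \<Longrightarrow> subset_mean t A (\<lambda>T. f T + c) = subset_mean t A f + c"
  using subset_mean_const[of A t c] by (simp add: subset_mean_def distrib_left sum.distrib)

lemma subset_mean_diff:
  "subset_mean t A (\<lambda>T. f T - g T) = subset_mean t A f - subset_mean t A g"
  by (simp add: subset_mean_def right_diff_distrib sum_subtractf)

lemma subset_mean_mult_right: "subset_mean t A f * c = subset_mean t A (\<lambda>T. f T * c)"
  by (simp add: subset_mean_def sum_distrib_right mult.assoc)

lemma subset_mean_sum:
  "subset_mean t A (\<lambda>T. \<Sum>i\<in>I. f i T) = (\<Sum>i\<in>I. subset_mean t A (f i))"
  unfolding subset_mean_def sum_distrib_left by (rule sum.swap)

lemma subset_mean_complement:
  "finite A \<Longrightarrow> subset_mean t A (\<lambda>T. f (A - T)) = subset_mean (1 - t) A f"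
  unfolding subset_mean_def subset_weight_def
  by (rule sum.reindex_bij_witness[of _ "\<lambda>T. A - T" "\<lambda>T. A - T"]) (auto simp: double_diff)

lemma subset_weight_mult_le_subset_mean:
  assumes "0 \<le> t" "t \<le> 1" "T \<subseteq> A" "finite A" "\<And>T. 0 \<le> f T"
  shows "subset_weight t A T * f T \<le> subset_mean t A f"
  unfolding subset_mean_def using assms subset_weight_nonneg
  by (intro member_le_sum) auto

lemma subset_mean_insert:
  assumes "finite A" "a \<notin> A"
  shows "subset_mean t (insert a A) f =
    t * subset_mean t A (\<lambda>T. f (insert a T)) + (1 - t) * subset_mean t A f"
proof -
  let ?g = "\<lambda>T. subset_weight t (insert a A) T * f T"
  have inj: "inj_on (insert a) (Pow A)"
    using assms by (intro inj_onI) (metis Diff_insert_absorb PowD in_mono)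
  have "subset_mean t (insert a A) f = sum ?g (Pow A) + sum ?g (insert a ` Pow A)"
    unfolding subset_mean_def Pow_insert using assms
    by (intro sum.union_disjoint) auto
  also have "sum ?g (insert a ` Pow A) = t * subset_mean t A (\<lambda>T. f (insert a T))"
    unfolding sum.reindex[OF inj] subset_mean_def sum_distrib_left
  proof (rule sum.cong[OF refl])
    fix T assume "T \<in> Pow A"
    then have "card (insert a T) = Suc (card T)" "insert a A - insert a T = A - T"
      using assms rev_finite_subset[of A T] by (auto simp: card_insert_if)
    then show "(?g \<circ> insert a) T = t * (subset_weight t A T * f (insert a T))"
      by (simp add: subset_weight_def)
  qed
  also have "sum ?g (Pow A) = (1 - t) * subset_mean t A f"
    unfolding subset_mean_def sum_distrib_left
  proof (rule sum.cong[OF refl])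
    fix T assume "T \<in> Pow A"
    then have "card (insert a A - T) = Suc (card (A - T))"
      using assms by (auto simp: insert_Diff_if)
    then show "?g T = (1 - t) * (subset_weight t A T * f T)"
      by (simp add: subset_weight_def)
  qed
  finally show ?thesis by simp
qed

lemma subset_mean_le_lipschitz:
  assumes "finite A" "0 \<le> t" "t \<le> 1" "0 \<le> d" "d \<le> 1"
    and "\<And>T a. f T \<le> f (insert a T)" "\<And>T a. f (insert a T) \<le> f T + 1"
  shows "subset_mean t A f \<le> subset_mean d A f + real (card A) * max 0 (t - d)"
  using assms(1,6,7)
proof (induction A arbitrary: f rule: finite_induct)
  case empty
  then show ?case by (simp add: subset_mean_def subset_weight_def)
next
  case (insert a A)
  let ?fa = "\<lambda>T. f (insert a T)" and ?m = "real (card A) * max 0 (t - d)"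
  have IH_a: "subset_mean t A ?fa \<le> subset_mean d A ?fa + ?m"
    using insert.prems by (intro insert.IH) (simp_all add: insert_commute)
  have IH: "subset_mean t A f \<le> subset_mean d A f + ?m"
    using insert.prems by (intro insert.IH) simp_all
  have gap: "0 \<le> subset_mean d A ?fa - subset_mean d A f" "subset_mean d A ?fa - subset_mean d A f \<le> 1"
    using subset_mean_mono[of d A f ?fa] subset_mean_mono[of d A ?fa "\<lambda>T. f T + 1"]
      subset_mean_add_const[OF insert.hyps(1)] insert.prems assms(4,5) by auto
  have "subset_mean t (insert a A) f \<le> t * (subset_mean d A ?fa + ?m) + (1 - t) * (subset_mean d A f + ?m)"
    unfolding subset_mean_insert[OF insert.hyps]
    using IH_a IH assms(2,3) by (intro add_mono mult_left_mono) auto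
  also have "\<dots> = subset_mean d (insert a A) f + (t - d) * (subset_mean d A ?fa - subset_mean d A f) + ?m"
    unfolding subset_mean_insert[OF insert.hyps] by (simp add: algebra_simps)
  also have "\<dots> \<le> subset_mean d (insert a A) f + max 0 (t - d) + ?m"
    using gap by (cases "d \<le> t") (auto simp: mult_left_le mult_nonpos_nonneg)
  finally show ?case
    using insert.hyps by (simp add: algebra_simps)
qed

text \<open>Gibbs' inequality when h is uniform on its support.\<close>
lemma cross_entropy_uniform_ge:
  fixes h G :: "'a \<Rightarrow> real"
  assumes "finite Y" and h_vals: "\<And>w. w \<in> Y \<Longrightarrow> h w = 0 \<or> h w = c"
    and h_sum: "(\<Sum>w\<in>Y. h w) = 1" and G_sum: "(\<Sum>w\<in>Y. G w) \<le> 1"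
    and G_nonneg: "\<And>w. w \<in> Y \<Longrightarrow> 0 \<le> G w" and G_pos: "\<And>w. w \<in> Y \<Longrightarrow> h w \<noteq> 0 \<Longrightarrow> 0 < G w"
  shows "- log 2 c \<le> (\<Sum>w\<in>Y. h w * (- log 2 (G w)))"
proof -
  define U where "U = {w\<in>Y. h w \<noteq> 0}"
  have "finite U" "U \<subseteq> Y"
    using \<open>finite Y\<close> by (auto simp: U_def)
  have h_U: "\<And>w. w \<in> U \<Longrightarrow> h w = c"
    using h_vals by (auto simp: U_def)
  have restrict: "(\<Sum>w\<in>Y. h w * g w) = (\<Sum>w\<in>U. c * g w)" for g
    using \<open>finite Y\<close> h_U by (simp add: U_def sum.mono_neutral_right[of Y] flip: sum.inter_filter)
  have cU: "c * real (card U) = 1"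
    using restrict[of "\<lambda>_. 1"] h_sum by (simp add: mult.commute)
  then have "0 < c"
    by (smt (verit) mult_nonpos_nonneg of_nat_0_le_iff)
  \<comment> \<open>ln x \<le> x - 1 at x = G w / c\<close>
  have "c * (- log 2 c) - (G w - c) / ln 2 \<le> c * (- log 2 (G w))" if "w \<in> U" for w
  proof -
    have "0 < G w"
      using that G_pos by (auto simp: U_def)
    then have "log 2 (G w / c) \<le> (G w / c - 1) / ln 2"
      using \<open>0 < c\<close> ln_le_minus_one[of "G w / c"] by (simp add: log_def divide_right_mono)
    then have "log 2 (G w) - log 2 c \<le> (G w / c - 1) / ln 2"
      using \<open>0 < G w\<close> \<open>0 < c\<close> by (simp add: log_divide)
    then have "c * (log 2 (G w) - log 2 c) \<le> c * ((G w / c - 1) / ln 2)"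
      using \<open>0 < c\<close> by (intro mult_left_mono) auto
    also have "\<dots> = (G w - c) / ln 2"
      using \<open>0 < c\<close> by (simp add: field_simps)
    finally show ?thesis
      by (simp add: right_diff_distrib)
  qed
  then have "(\<Sum>w\<in>U. c * (- log 2 c) - (G w - c) / ln 2) \<le> (\<Sum>w\<in>Y. h w * (- log 2 (G w)))"
    unfolding restrict by (rule sum_mono)
  moreover have "(\<Sum>w\<in>U. c * (- log 2 c) - (G w - c) / ln 2) = - log 2 c - ((\<Sum>w\<in>U. G w) - 1) / ln 2"
    using cU by (simp add: sum_subtractf sum_divide_distrib[symmetric] algebra_simps)
  moreover have "(\<Sum>w\<in>U. G w) \<le> 1"
    using sum_mono2[OF \<open>finite Y\<close> \<open>U \<subseteq> Y\<close>, of G] G_nonneg G_sum by auto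
  ultimately show ?thesis
    by (smt (verit) divide_nonpos_pos ln_gt_zero one_less_numeral_iff semiring_norm(76))
qed

lemma bsc_eq_subset_mean:
  assumes "x \<in> vecs n" "z \<in> vecs n"
  shows "bsc q n x z =
    subset_mean (2*q) {..<n} (\<lambda>S. if supp (vadd x z) \<subseteq> S then 1 / 2 ^ card S else 0)"
proof -
  let ?X = "supp (vadd x z)" and ?A = "{..<n}"
  have X: "?X \<subseteq> ?A"
    using assms supp_subset_lessThan[of "vadd x z"] by (simp add: vecs_def)
  have "subset_mean (2*q) ?A (\<lambda>S. if ?X \<subseteq> S then 1 / 2 ^ card S else 0)
      = (\<Sum>S\<in>Pow ?A. if ?X \<subseteq> S then q ^ card S * (1 - 2*q) ^ card (?A - S) else 0)"
    unfolding subset_mean_def subset_weight_def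
    by (rule sum.cong[OF refl]) (simp add: power_mult_distrib)
  also have "\<dots> = (\<Sum>S\<in>{S\<in>Pow ?A. ?X \<subseteq> S}. q ^ card S * (1 - 2*q) ^ card (?A - S))"
    by (rule sum.inter_filter[symmetric]) simp
  also have "\<dots> = q ^ card ?X * (1 - q) ^ (n - card ?X)"
    using sum_Pow_supersets_binomial[of ?A ?X q "1 - 2*q"] X
    by (simp add: card_Diff_subset finite_subset)
  finally show ?thesis
    using hdist_eq_card_supp[of x z] assms by (simp add: bsc_def vecs_def)
qed

section \<open>Posteriors of the eavesdropper\<close>

text \<open>For the coset code with uniform input, Z is uniform, so bsc_posterior q n z w is
  P(W = w | Z = z), and erased_posterior z S w is the same posterior given that exactly the
  positions in S were randomized.\<close>
definition bsc_posterior :: "real \<Rightarrow> nat \<Rightarrow> bool list \<Rightarrow> bool list set \<Rightarrow> real" where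
  "bsc_posterior q n z w = (\<Sum>x\<in>w. bsc q n x z)"

definition erased_posterior :: "bool list \<Rightarrow> nat set \<Rightarrow> bool list set \<Rightarrow> real" where
  "erased_posterior z S w = real (card {x\<in>w. supp (vadd x z) \<subseteq> S}) / 2 ^ card S"

text \<open>The residual uncertainty about a uniform codeword of C whose positions in T are erased.\<close>
definition erasure_equivocation :: "nat \<Rightarrow> bool list set \<Rightarrow> nat set \<Rightarrow> real" where
  "erasure_equivocation n C T = log 2 (real (card (C \<inter> vecs_on n T)))"

lemma erased_posterior_eq_sum:
  "finite w \<Longrightarrow> erased_posterior z S w = (\<Sum>x\<in>w. if supp (vadd x z) \<subseteq> S then 1 / 2 ^ card S else 0)"
  by (simp add: erased_posterior_def flip: sum.inter_filter)

lemma bsc_posterior_eq_subset_mean: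
  assumes "w \<subseteq> vecs n" "finite w" "z \<in> vecs n"
  shows "bsc_posterior q n z w = subset_mean (2*q) {..<n} (\<lambda>S. erased_posterior z S w)"
proof -
  have "bsc_posterior q n z w =
      (\<Sum>x\<in>w. subset_mean (2*q) {..<n} (\<lambda>S. if supp (vadd x z) \<subseteq> S then 1 / 2 ^ card S else 0))"
    unfolding bsc_posterior_def using assms by (intro sum.cong refl bsc_eq_subset_mean) auto
  also have "\<dots> = subset_mean (2*q) {..<n} (\<lambda>S. erased_posterior z S w)"
    by (simp add: subset_mean_sum erased_posterior_eq_sum[OF assms(2)])
  finally show ?thesis .
qed

lemma card_vecs_vadd_supp_subset:
  assumes "z \<in> vecs n"
  shows "card {x \<in> vecs n. supp (vadd x z) \<subseteq> S} = card (vecs_on n S)"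
proof (rule bij_betw_same_card)
  show "bij_betw (\<lambda>x. vadd x z) {x \<in> vecs n. supp (vadd x z) \<subseteq> S} (vecs_on n S)"
    using assms
    by (intro bij_betw_byWitness[where f' = "\<lambda>x. vadd x z"])
      (auto simp: vecs_on_def vecs_def vadd_vadd_cancel_right)
qed

lemma sum_bsc_vecs:
  assumes "z \<in> vecs n"
  shows "(\<Sum>x\<in>vecs n. bsc q n x z) = 1"
proof -
  have "(\<Sum>x\<in>vecs n. bsc q n x z) = subset_mean (2*q) {..<n} (\<lambda>S. erased_posterior z S (vecs n))"
    using bsc_posterior_eq_subset_mean[OF _ finite_vecs assms] by (simp add: bsc_posterior_def)
  also have "\<dots> = subset_mean (2*q) {..<n} (\<lambda>_. 1)"
    by (intro subset_mean_cong)
      (simp add: erased_posterior_def card_vecs_vadd_supp_subset[OF assms] card_vecs_on)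
  finally show ?thesis
    by (simp add: subset_mean_const)
qed

context binary_linear_code
begin

lemma sum_erased_posterior:
  assumes "S \<subseteq> {..<n}" "z \<in> vecs n"
  shows "(\<Sum>w\<in>cosets (vecs n) C. erased_posterior z S w) = 1"
proof -
  have "(\<Sum>w\<in>cosets (vecs n) C. erased_posterior z S w) =
      (\<Sum>x\<in>vecs n. if supp (vadd x z) \<subseteq> S then 1 / 2 ^ card S else 0)"
    by (subst sum_cosets[symmetric], rule sum.cong[OF refl]) (auto elim: mem_cosetsE simp: erased_posterior_eq_sum)
  also have "\<dots> = erased_posterior z S (vecs n)"
    by (simp add: erased_posterior_eq_sum)
  also have "\<dots> = 1"
    using assms by (simp add: erased_posterior_def card_vecs_vadd_supp_subset card_vecs_on)
  finally show ?thesis .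
qed

text \<open>If some x0 in w differs from z only inside S, the words of w with this property are exactly
  those differing from x0 only inside S.\<close>
lemma erased_posterior_cases:
  assumes "w \<in> cosets (vecs n) C" "z \<in> vecs n"
  shows "erased_posterior z S w = 0 \<or> erased_posterior z S w = real (card (C \<inter> vecs_on n S)) / 2 ^ card S"
proof (cases "{x\<in>w. supp (vadd x z) \<subseteq> S} = {}")
  case True
  then show ?thesis unfolding erased_posterior_def by (simp only: card.empty) simp
next
  case False
  then obtain x0 where x0: "x0 \<in> w" "supp (vadd x0 z) \<subseteq> S"
    by blast
  have w: "w \<subseteq> vecs n" "coset C x0 = w"
    using assms(1) x0(1) by (auto elim: mem_cosetsE)
  have "supp (vadd x z) \<subseteq> S \<longleftrightarrow> supp (vadd x x0) \<subseteq> S" if "x \<in> w" for x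
  proof -
    have len: "length x = n" "length x0 = n" "length z = n"
      using that x0(1) w assms(2) by (auto simp: vecs_def)
    have "vadd x z = vadd (vadd x x0) (vadd x0 z)" "vadd x x0 = vadd (vadd x z) (vadd x0 z)"
      using len by (auto intro: nth_equalityI)
    then show ?thesis
      using x0(2) supp_vadd_subset len by (metis le_sup_iff length_vadd min.idem subset_trans)
  qed
  then have "{x\<in>w. supp (vadd x z) \<subseteq> S} = {x\<in>coset C x0. supp (vadd x x0) \<subseteq> S}"
    using w(2) by auto
  then show ?thesis
    using card_coset_vadd_supp_subset x0(1) w(1) by (auto simp: erased_posterior_def)
qed

lemma coset_code:
  assumes "c \<in> C"
  shows "coset C c = C"
proof -
  have "y \<in> C" if "vadd c y \<in> C" "y \<in> vecs n" for y
    using vadd_in_code[OF assms that(1)] assms that(2) length_code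
    by (simp add: vecs_def vadd_vadd_cancel_left)
  then show ?thesis
    using mem_coset_iff[of c] assms code_subset_vecs vadd_in_code by blast
qed

lemma sum_bsc_posterior:
  "z \<in> vecs n \<Longrightarrow> (\<Sum>w\<in>cosets (vecs n) C. bsc_posterior q n z w) = 1"
  by (simp add: bsc_posterior_def sum_cosets sum_bsc_vecs)

lemma p_WZ_eq:
  assumes "w \<in> cosets (vecs n) C"
  shows "p_WZ q n (vecs n) C w z = bsc_posterior q n z w / 2 ^ n"
proof -
  have "real (card (cosets (vecs n) C)) * real (card w) = 2 ^ n"
    using card_cosets assms by (auto elim: mem_cosetsE)
  then show ?thesis
    by (simp add: p_WZ_def bsc_posterior_def field_simps flip: sum_distrib_left sum_divide_distrib)
qed

lemma p_Z_eq: "z \<in> vecs n \<Longrightarrow> p_Z q n (vecs n) C z = 1 / 2 ^ n"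
  using sum_bsc_posterior[of z q] p_WZ_eq
  by (simp add: p_Z_def flip: sum_divide_distrib)

lemma equivocation_eq:
  "equivocation q n (vecs n) C =
    (\<Sum>z\<in>vecs n. \<Sum>w\<in>cosets (vecs n) C. - (bsc_posterior q n z w * log 2 (bsc_posterior q n z w))) / 2 ^ n"
proof -
  let ?G = "\<lambda>z w. bsc_posterior q n z w"
  have "equivocation q n (vecs n) C =
      - (\<Sum>w\<in>cosets (vecs n) C. \<Sum>z\<in>vecs n. ?G z w * log 2 (?G z w) / 2 ^ n)"
    unfolding equivocation_def using p_WZ_eq p_Z_eq by (intro arg_cong[where f = uminus] sum.cong) auto
  also have "\<dots> = - (\<Sum>z\<in>vecs n. \<Sum>w\<in>cosets (vecs n) C. ?G z w * log 2 (?G z w) / 2 ^ n)"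
    by (rule arg_cong[where f = uminus], rule sum.swap)
  also have "\<dots> = (\<Sum>z\<in>vecs n. \<Sum>w\<in>cosets (vecs n) C. - (?G z w * log 2 (?G z w))) / 2 ^ n"
    by (simp only: sum_divide_distrib[symmetric] sum_negf[symmetric] minus_divide_left)
  finally show ?thesis .
qed

lemma bec_ml_error_eq_subset_mean:
  "bec_ml_error n C d = subset_mean d {..<n} (\<lambda>T. 1 - 1 / real (card (C \<inter> vecs_on n T)))"
proof -
  have "(\<forall>i<n. i \<notin> S \<longrightarrow> c' ! i = c ! i) \<longleftrightarrow> supp (vadd c' c) \<subseteq> S" if "c \<in> C" "c' \<in> C" for c c' S
    using that length_code by (auto simp: supp_def)
  then have "{c'\<in>C. \<forall>i<n. i \<notin> S \<longrightarrow> c' ! i = c ! i} = {c' \<in> coset C c. supp (vadd c' c) \<subseteq> S}"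
    if "c \<in> C" for c S
    using that coset_code by auto
  then have "card {c'\<in>C. \<forall>i<n. i \<notin> S \<longrightarrow> c' ! i = c ! i} = card (C \<inter> vecs_on n S)" if "c \<in> C" for c S
    using that code_subset_vecs card_coset_vadd_supp_subset by auto
  moreover have "n - card S = card ({..<n} - S)" if "S \<subseteq> {..<n}" for S
    using that by (simp add: card_Diff_subset finite_subset)
  ultimately have "bec_ml_error n C d =
      (\<Sum>c\<in>C. 1 / real (card C) * subset_mean d {..<n} (\<lambda>T. 1 - 1 / real (card (C \<inter> vecs_on n T))))"
    unfolding bec_ml_error_def subset_mean_def subset_weight_def sum_distrib_left
    by (intro sum.cong refl) (simp add: mult.assoc)
  then show ?thesis
    using zero_in_code by auto
qed

lemma erasure_equivocation_le_insert:
  "erasure_equivocation n C T \<le> erasure_equivocation n C (insert a T)"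
proof -
  have "card (C \<inter> vecs_on n T) \<le> card (C \<inter> vecs_on n (insert a T))"
    by (intro card_mono) (auto simp: vecs_on_def)
  then show ?thesis
    using card_code_vecs_on_pos[of T] by (simp add: erasure_equivocation_def)
qed

lemma erasure_equivocation_insert_le:
  "erasure_equivocation n C (insert a T) \<le> erasure_equivocation n C T + 1"
proof -
  have "erasure_equivocation n C (insert a T) \<le> log 2 (2 * real (card (C \<inter> vecs_on n T)))"
    unfolding erasure_equivocation_def
    using card_code_vecs_on_insert_le[of a T] card_code_vecs_on_pos[of "insert a T"] by simp
  also have "\<dots> = 1 + erasure_equivocation n C T"
  proof -
    have "log 2 (2 * x) = 1 + log 2 x" if "0 < x" for x :: real
      using that by (simp add: log_mult)
    then show ?thesis
      using card_code_vecs_on_pos[of T] unfolding erasure_equivocation_def by simp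
  qed
  finally show ?thesis by simp
qed

text \<open>When at least two codewords remain the ML decoder fails with probability at least 1/2, while
  the equivocation never exceeds k.\<close>
lemma erasure_equivocation_le:
  assumes "card C = 2 ^ k"
  shows "erasure_equivocation n C T \<le> 2 * real k * (1 - 1 / real (card (C \<inter> vecs_on n T)))"
proof (cases "card (C \<inter> vecs_on n T) = 1")
  case True
  then show ?thesis by (simp add: erasure_equivocation_def)
next
  case False
  then have "1/2 \<le> 1 - 1 / real (card (C \<inter> vecs_on n T))"
    using card_code_vecs_on_pos[of T] by (simp add: field_simps)
  then have "real k * (1/2) \<le> real k * (1 - 1 / real (card (C \<inter> vecs_on n T)))"
    by (intro mult_left_mono) auto
  moreover have "card (C \<inter> vecs_on n T) \<le> 2 ^ k"
    using assms card_mono[of C "C \<inter> vecs_on n T"] by auto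
  then have "erasure_equivocation n C T \<le> log 2 (2 ^ k)"
    unfolding erasure_equivocation_def using card_code_vecs_on_pos[of T]
    by (subst log_le_cancel_iff) auto
  ultimately show ?thesis
    by (simp add: log_nat_power mult_ac)
qed

lemma subset_mean_erasure_equivocation_le:
  assumes "card C = 2 ^ k" "0 \<le> d" "d \<le> 1"
  shows "subset_mean d {..<n} (erasure_equivocation n C) \<le> 2 * real k * bec_ml_error n C d"
proof -
  have "subset_mean d {..<n} (erasure_equivocation n C) \<le>
      subset_mean d {..<n} (\<lambda>T. 2 * real k * (1 - 1 / real (card (C \<inter> vecs_on n T))))"
    using assms erasure_equivocation_le by (intro subset_mean_mono) auto
  also have "\<dots> = 2 * real k * bec_ml_error n C d"
    by (simp add: bec_ml_error_eq_subset_mean subset_mean_def sum_distrib_left algebra_simps)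
  finally show ?thesis .
qed

end

section \<open>Equivocation of the coset code\<close>

locale bsc_wiretap_code = binary_linear_code +
  fixes k :: nat and q :: real
  assumes card_code: "card C = 2 ^ k" and q_nonneg: "0 \<le> q" and q_le_half: "q \<le> 1/2"
begin

sublocale dual: binary_linear_code n "dual_code n C"
  by (rule binary_linear_code_dual)

lemma bsc_posterior_nonneg: "0 \<le> bsc_posterior q n z w"
  using q_nonneg q_le_half by (auto simp: bsc_posterior_def bsc_def intro!: sum_nonneg)

lemma neg_log_card_dual_vecs_on:
  assumes "S \<subseteq> {..<n}"
  shows "- log 2 (real (card (dual_code n C \<inter> vecs_on n S)) / 2 ^ card S) =
    real k - erasure_equivocation n C ({..<n} - S)"
proof -
  have "real (card (dual_code n C \<inter> vecs_on n S)) / 2 ^ card S =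
      real (card (C \<inter> vecs_on n ({..<n} - S))) / 2 ^ k"
    using card_dual_vecs_on[OF assms] card_code by (simp add: Int_commute field_simps)
  then show ?thesis
    using card_code_vecs_on_pos[of "{..<n} - S"]
    by (simp add: erasure_equivocation_def log_divide log_nat_power)
qed

text \<open>Given that exactly the positions in S were randomized, the eavesdropper's posterior over the
  messages is uniform on a set of size 2^k / |C \<inter> vecs_on n ({..<n} - S)|.\<close>
lemma cross_entropy_erased_posterior_ge:
  assumes S: "S \<subseteq> {..<n}" "0 < subset_weight (2*q) {..<n} S" and z: "z \<in> vecs n"
  shows "real k - erasure_equivocation n C ({..<n} - S) \<le>
    (\<Sum>w\<in>cosets (vecs n) (dual_code n C). erased_posterior z S w * - log 2 (bsc_posterior q n z w))"
  unfolding neg_log_card_dual_vecs_on[OF S(1), symmetric]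
proof (rule cross_entropy_uniform_ge)
  show "finite (cosets (vecs n) (dual_code n C))"
    by (simp add: finite_cosets)
  show "(\<Sum>w\<in>cosets (vecs n) (dual_code n C). erased_posterior z S w) = 1"
    using dual.sum_erased_posterior S z by blast
  show "(\<Sum>w\<in>cosets (vecs n) (dual_code n C). bsc_posterior q n z w) \<le> 1"
    using dual.sum_bsc_posterior z by simp
  fix w assume w: "w \<in> cosets (vecs n) (dual_code n C)"
  show "erased_posterior z S w = 0 \<or>
      erased_posterior z S w = real (card (dual_code n C \<inter> vecs_on n S)) / 2 ^ card S"
    using dual.erased_posterior_cases[OF w z] .
  show "0 \<le> bsc_posterior q n z w"
    by (rule bsc_posterior_nonneg)
  assume "erased_posterior z S w \<noteq> 0"
  then have "0 < subset_weight (2*q) {..<n} S * erased_posterior z S w"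
    using S(2) by (simp add: erased_posterior_def)
  also have "\<dots> \<le> subset_mean (2*q) {..<n} (\<lambda>S. erased_posterior z S w)"
    using S q_nonneg q_le_half
    by (intro subset_weight_mult_le_subset_mean) (auto simp: erased_posterior_def)
  also have "\<dots> = bsc_posterior q n z w"
    using w z by (auto elim!: dual.mem_cosetsE simp: bsc_posterior_eq_subset_mean)
  finally show "0 < bsc_posterior q n z w" .
qed

lemma entropy_bsc_posterior_ge:
  assumes z: "z \<in> vecs n"
  shows "real k - subset_mean (1 - 2*q) {..<n} (erasure_equivocation n C) \<le>
    (\<Sum>w\<in>cosets (vecs n) (dual_code n C). - (bsc_posterior q n z w * log 2 (bsc_posterior q n z w)))"
proof -
  let ?W = "cosets (vecs n) (dual_code n C)" and ?G = "\<lambda>w. bsc_posterior q n z w"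
  have "real k - subset_mean (1 - 2*q) {..<n} (erasure_equivocation n C) =
      subset_mean (2*q) {..<n} (\<lambda>S. real k - erasure_equivocation n C ({..<n} - S))"
    by (simp add: subset_mean_diff subset_mean_const subset_mean_complement)
  also have "\<dots> \<le> subset_mean (2*q) {..<n} (\<lambda>S. \<Sum>w\<in>?W. erased_posterior z S w * - log 2 (?G w))"
    using q_nonneg q_le_half cross_entropy_erased_posterior_ge[OF _ _ z]
    by (intro subset_mean_mono) auto
  also have "\<dots> = (\<Sum>w\<in>?W. subset_mean (2*q) {..<n} (\<lambda>S. erased_posterior z S w) * - log 2 (?G w))"
    by (simp only: subset_mean_sum subset_mean_mult_right)
  also have "\<dots> = (\<Sum>w\<in>?W. - (?G w * log 2 (?G w)))"
    using z by (intro sum.cong refl) (auto elim!: dual.mem_cosetsE simp: bsc_posterior_eq_subset_mean)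
  finally show ?thesis .
qed

lemma equivocation_ge:
  "real k - subset_mean (1 - 2*q) {..<n} (erasure_equivocation n C) \<le>
    equivocation q n (vecs n) (dual_code n C)"
proof -
  let ?m = "subset_mean (1 - 2*q) {..<n} (erasure_equivocation n C)"
  have "(\<Sum>z\<in>vecs n. real k - ?m) \<le> (\<Sum>z\<in>vecs n. \<Sum>w\<in>cosets (vecs n) (dual_code n C).
      - (bsc_posterior q n z w * log 2 (bsc_posterior q n z w)))"
    by (rule sum_mono) (rule entropy_bsc_posterior_ge)
  then show ?thesis
    by (simp add: dual.equivocation_eq card_vecs field_simps)
qed

lemma equivocation_ge_bec_ml_error:
  assumes "0 \<le> d" "d \<le> 1"
  shows "real k - 2 * real k * bec_ml_error n C d - real n * max 0 (1 - 2*q - d) \<le>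
    equivocation q n (vecs n) (dual_code n C)"
proof -
  have "subset_mean (1 - 2*q) {..<n} (erasure_equivocation n C) \<le>
      subset_mean d {..<n} (erasure_equivocation n C) + real n * max 0 (1 - 2*q - d)"
    using subset_mean_le_lipschitz[of "{..<n}" "1 - 2*q" d] assms q_nonneg q_le_half
      erasure_equivocation_le_insert erasure_equivocation_insert_le by simp
  then show ?thesis
    using subset_mean_erasure_equivocation_le[OF card_code assms] equivocation_ge by simp
qed

end

lemma (in binary_linear_code) info_rate_vecs_dual_code:
  assumes "card C = 2 ^ k" "0 < n"
  shows "info_rate n (vecs n) (dual_code n C) = real k / real n"
proof -
  have "card C \<le> card (vecs n)"
    by (rule card_mono[OF finite_vecs code_subset_vecs])
  then have "k \<le> n"
    using assms(1) card_vecs[of n] by (simp add: power_le_imp_le_exp)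
  then have "real (card (dual_code n C)) = 2 ^ (n - k)"
    using card_dual_code assms(1) by (simp add: power_diff field_simps)
  then show ?thesis
    using \<open>k \<le> n\<close> assms(2) by (simp add: info_rate_def card_vecs log_nat_power diff_divide_distrib)
qed

lemma ereal_le_Liminf_if_eventually_gt:
  assumes "\<And>e. 0 < e \<Longrightarrow> eventually (\<lambda>x. c - e < f x) F"
  shows "ereal c \<le> Liminf F (\<lambda>x. ereal (f x))"
proof (subst le_Liminf_iff, intro allI impI)
  fix y assume "y < ereal c"
  then obtain r where r: "y < ereal r" "r < c"
    using ereal_dense2 by force
  show "eventually (\<lambda>x. y < ereal (f x)) F"
    using assms[of "c - r"] r by (auto elim!: eventually_mono intro: less_trans)
qed

lemma code_seqE:
  assumes "code_seq len C Rc"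
  obtains k where "\<And>m. binary_linear_code (len m) (C m)" "\<And>m. 0 < len m"
    "\<And>m. card (C m) = 2 ^ k m" "\<And>m. real (k m) = Rc * real (len m)"
proof -
  have "\<forall>m. \<exists>k. card (C m) = 2 ^ k \<and> real k = Rc * real (len m)"
    using assms by (simp add: code_seq_def)
  then obtain k where "\<And>m. card (C m) = 2 ^ k m \<and> real (k m) = Rc * real (len m)"
    by metis
  then show thesis
    using that assms by (simp add: code_seq_def binary_linear_code_def)
qed

lemma erasure_threshold_approx:
  assumes "good_code_seq len C Rc" "0 < e"
  obtains d where "0 \<le> d" "d \<le> 1" "(\<lambda>m. bec_ml_error (len m) (C m) d) \<longlonglongrightarrow> 0"
    "erasure_threshold len C - e < d"
proof -
  let ?D = "{\<delta> \<in> {0..1}. (\<lambda>m. bec_ml_error (len m) (C m) \<delta>) \<longlonglongrightarrow> 0}"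
  have "?D \<noteq> {}" "bdd_above ?D"
    using assms(1) by (auto simp: good_code_seq_def intro: bdd_aboveI[of _ 1])
  then obtain d where "d \<in> ?D" "Sup ?D - e < d"
    using less_cSup_iff[of ?D "Sup ?D - e"] assms(2) by auto
  then show thesis
    using that by (auto simp: erasure_threshold_def)
qed

lemma equivocation_rate_eventually_gt:
  assumes q: "0 \<le> q" "q \<le> 1/2" and C: "code_seq len C Rc" "0 < Rc" and "0 < e"
    and d: "0 \<le> d" "d \<le> 1" "(\<lambda>m. bec_ml_error (len m) (C m) d) \<longlonglongrightarrow> 0" "1 - 2*q - d < e / 2"
  shows "eventually (\<lambda>m. Rc - e <
    equivocation q (len m) (vecs (len m)) (dual_code (len m) (C m)) / real (len m)) sequentially"
proof -
  obtain k where wiretap: "\<And>m. bsc_wiretap_code (len m) (C m) (k m) q"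
    and len: "\<And>m. 0 < len m" and k: "\<And>m. real (k m) = Rc * real (len m)"
    using code_seqE[OF C(1)] q by (metis bsc_wiretap_code.intro bsc_wiretap_code_axioms.intro)
  have "eventually (\<lambda>m. bec_ml_error (len m) (C m) d < e / (4 * Rc)) sequentially"
    using order_tendstoD(2)[OF d(3)] \<open>0 < e\<close> C(2) by simp
  then show ?thesis
  proof (rule eventually_mono)
    fix m
    let ?n = "real (len m)" and ?err = "bec_ml_error (len m) (C m) d"
    assume "?err < e / (4 * Rc)"
    then have "2 * Rc * ?err < e / 2"
      using C(2) by (simp add: field_simps)
    moreover have "(Rc - 2 * Rc * ?err - max 0 (1 - 2*q - d)) * ?n \<le>
        equivocation q (len m) (vecs (len m)) (dual_code (len m) (C m))"
      using bsc_wiretap_code.equivocation_ge_bec_ml_error[OF wiretap d(1,2), of m] k[of m]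
      by (simp add: algebra_simps)
    then have "Rc - 2 * Rc * ?err - max 0 (1 - 2*q - d) \<le>
        equivocation q (len m) (vecs (len m)) (dual_code (len m) (C m)) / ?n"
      using len[of m] by (simp add: pos_le_divide_eq)
    moreover have "max 0 (1 - 2*q - d) < e / 2"
      using d(4) \<open>0 < e\<close> by (simp add: max_def)
    ultimately show "Rc - e < equivocation q (len m) (vecs (len m)) (dual_code (len m) (C m)) / ?n"
      by linarith
  qed
qed

theorem theorem3:
  fixes q Rc :: real and len :: "nat \<Rightarrow> nat" and C :: "nat \<Rightarrow> bool list set"
  assumes "0 \<le> q" and "q \<le> 1/2"
    and "good_code_seq len C Rc"
    and "q \<ge> (1 - erasure_threshold len C) / 2"
  shows "nested_achieves q len (\<lambda>m. vecs (len m)) (\<lambda>m. dual_code (len m) (C m)) Rc Rc"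
proof -
  have C: "code_seq len C Rc" "0 < Rc"
    using assms(3) by (auto simp: good_code_seq_def)
  obtain k where lin: "\<And>m. binary_linear_code (len m) (C m)" and len: "\<And>m. 0 < len m"
    and k: "\<And>m. card (C m) = 2 ^ k m" "\<And>m. real (k m) = Rc * real (len m)"
    using code_seqE[OF C(1)] by blast
  have rate: "info_rate (len m) (vecs (len m)) (dual_code (len m) (C m)) = Rc" for m
    using binary_linear_code.info_rate_vecs_dual_code[OF lin k(1) len] k(2) len[of m] by simp
  have legit: "legit_error (len m) (vecs (len m)) (dual_code (len m) (C m)) = 0" for m
    using binary_linear_code.legit_error_eq_0[OF binary_linear_code.binary_linear_code_dual[OF lin]] .
  let ?rate = "\<lambda>m. equivocation q (len m) (vecs (len m)) (dual_code (len m) (C m)) / real (len m)"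
  have "ereal Rc \<le> liminf (\<lambda>m. ereal (?rate m))"
  proof (rule ereal_le_Liminf_if_eventually_gt)
    fix e :: real assume "0 < e"
    then obtain d where "0 \<le> d" "d \<le> 1" "(\<lambda>m. bec_ml_error (len m) (C m) d) \<longlonglongrightarrow> 0"
      "erasure_threshold len C - e / 2 < d"
      using erasure_threshold_approx[OF assms(3), of "e / 2"] by auto
    then show "eventually (\<lambda>m. Rc - e < ?rate m) sequentially"
      using equivocation_rate_eventually_gt[OF assms(1,2) C \<open>0 < e\<close>] assms(4) by simp
  qed
  then show ?thesis
    using rate legit by (simp add: nested_achieves_def)
qed

end
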